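(* Let $\varepsilon=\varepsilon(n)$ satisfy $\varepsilon\le1$ and $n\varepsilon\to\infty$. In the variable-processor cup game on $n$ cups with $\varepsilon$ resource augmentation, suppose the emptier uses proportional emptying and the filler always places at least $1/n^2$ units of water into every cup in every round. Then there is a constant $C$ such that at any time $t$ the backlog is at most $C\varepsilon^{-1}\log n$ with probability at least $1-1/\mathrm{poly}(n)$ (high probability in $n$), against any adaptive filler.
   Context: Variable-processor cup game with $\varepsilon$ resource augmentation: nonnegative real fills, initially $0$; each round the filler chooses an integer $1\le p\le n$ and reals $q_1,\dots,q_n\in[0,1]$ with $\sum q_j=p$ and adds $q_j$ to cup $j$; then the emptier chooses $p$ distinct cups and replaces each of their fills $x$ by $\max(0,x-(1+\varepsilon))$. Backlog = maximum fill. The filler is adaptive (sees the outcomes of the emptier's previous random choices). Proportional emptying: in each round the emptier selects a random set of $p$ distinct cups such that each cup $j$ is included with probability exactly $q_j$ (such a distribution exists). *)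

theory Defs
  imports "HOL-Probability.Probability"
begin

text \<open>Histories: the list of sets of cups emptied in rounds 0,1,...
  A (deterministic, adaptive) filler strategy maps a history to the pair (p, q)
  chosen in the next round.\<close>

type_synonym history = "nat set list"
type_synonym filler = "history \<Rightarrow> nat \<times> (nat \<Rightarrow> real)"
type_synonym emptier = "history \<Rightarrow> nat set pmf"

primrec fills_pref :: "filler \<Rightarrow> real \<Rightarrow> history \<Rightarrow> nat \<Rightarrow> (nat \<Rightarrow> real)" where
  "fills_pref F e h 0 = (\<lambda>j. 0)"
| "fills_pref F e h (Suc k) =
     (\<lambda>j. let x = fills_pref F e h k j + snd (F (take k h)) j
          in if j \<in> h ! k then max 0 (x - (1 + e)) else x)"

definition fills :: "filler \<Rightarrow> real \<Rightarrow> history \<Rightarrow> (nat \<Rightarrow> real)" where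
  "fills F e h = fills_pref F e h (length h)"

definition backlog :: "nat \<Rightarrow> filler \<Rightarrow> real \<Rightarrow> history \<Rightarrow> real" where
  "backlog n F e h = Max ((\<lambda>j. fills F e h j) ` {..<n})"

primrec hist_pmf :: "emptier \<Rightarrow> nat \<Rightarrow> history pmf" where
  "hist_pmf E 0 = return_pmf []"
| "hist_pmf E (Suc t) = bind_pmf (hist_pmf E t) (\<lambda>h. map_pmf (\<lambda>S. h @ [S]) (E h))"

definition valid_filler :: "nat \<Rightarrow> filler \<Rightarrow> bool" where
  "valid_filler n F \<longleftrightarrow> (\<forall>h. 1 \<le> fst (F h) \<and> fst (F h) \<le> n
      \<and> (\<forall>j<n. 0 \<le> snd (F h) j \<and> snd (F h) j \<le> 1 \<and> 1 / (real n)^2 \<le> snd (F h) j)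
      \<and> (\<Sum>j<n. snd (F h) j) = real (fst (F h)))"

definition proportional_emptier :: "nat \<Rightarrow> filler \<Rightarrow> emptier \<Rightarrow> bool" where
  "proportional_emptier n F E \<longleftrightarrow> (\<forall>h.
      (\<forall>S\<in>set_pmf (E h). S \<subseteq> {..<n} \<and> card S = fst (F h))
      \<and> (\<forall>j<n. measure_pmf.prob (E h) {S. j \<in> S} = snd (F h) j))"

end

theory Submission
  imports Defs
begin

text \<open>Exponential potential \<open>\<Phi> = (\<Sum>j<n. exp (\<epsilon> x\<^sub>j / 4))\<close> of the fills \<open>x\<^sub>j\<close>. Proportional
  emptying removes \<open>1 + \<epsilon>\<close> from cup \<open>j\<close> with probability exactly \<open>q\<^sub>j\<close>, the amount it
  just received, so each cup has drift \<open>-\<epsilon> q\<^sub>j\<close> and its term of \<open>\<Phi>\<close> contracts in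
  expectation by \<open>exp (- \<epsilon>\<^sup>2 q\<^sub>j / 12)\<close>, up to an additive \<open>1\<close>. Since \<open>q\<^sub>j \<ge> 1 / n\<^sup>2\<close>, this
  gives \<open>E[\<Phi>] \<le> n / (1 - exp (- \<epsilon>\<^sup>2 / (12 n\<^sup>2)))\<close> at all times, which is \<open>O(n\<^sup>5)\<close> once
  \<open>n \<epsilon> \<ge> 1\<close>. Markov's inequality at level \<open>exp (\<epsilon> a / 4) = n\<^bsup>c + 10\<^esup>\<close> bounds the probability
  that the backlog exceeds \<open>a = 4 (c + 10) ln n / \<epsilon>\<close> by \<open>n\<^bsup>-c\<^esup>\<close>.\<close>

lemma fills_pref_append:
  "k \<le> length h \<Longrightarrow> fills_pref F e (h @ [S]) k = fills_pref F e h k"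
  by (induction k) (simp_all add: nth_append)

lemma fills_Nil: "fills F e [] = (\<lambda>j. 0)"
  by (simp add: fills_def)

lemma fills_snoc:
  "fills F e (h @ [S]) j = (let x = fills F e h j + snd (F h) j in
     if j \<in> S then max 0 (x - (1 + e)) else x)"
  unfolding fills_def by (simp add: fills_pref_append nth_append)

lemma finite_set_pmf_hist_pmf:
  "(\<And>h. finite (set_pmf (E h))) \<Longrightarrow> finite (set_pmf (hist_pmf E t))"
  by (induction t) auto

lemma finite_set_pmf_proportional_emptier:
  assumes "proportional_emptier n F E"
  shows "finite (set_pmf (E h))"
proof (rule finite_subset)
  show "set_pmf (E h) \<subseteq> Pow {..<n}"
    using assms unfolding proportional_emptier_def by auto
qed simp

lemma expectation_hist_pmf_Suc:
  fixes g :: "history \<Rightarrow> real"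
  assumes "\<And>h. finite (set_pmf (E h))"
  shows "measure_pmf.expectation (hist_pmf E (Suc t)) g
       = measure_pmf.expectation (hist_pmf E t) (\<lambda>h. measure_pmf.expectation (E h) (\<lambda>S. g (h @ [S])))"
proof -
  have fin: "finite (set_pmf (hist_pmf E t))"
    using assms by (rule finite_set_pmf_hist_pmf)
  have "measure_pmf.expectation (hist_pmf E (Suc t)) g
     = (\<Sum>h\<in>set_pmf (hist_pmf E t). pmf (hist_pmf E t) h *\<^sub>R
          measure_pmf.expectation (map_pmf (\<lambda>S. h @ [S]) (E h)) g)"
    by (simp only: hist_pmf.simps, rule pmf_expectation_bind) (use fin assms in auto)
  also have "\<dots> = measure_pmf.expectation (hist_pmf E t)
      (\<lambda>h. measure_pmf.expectation (E h) (\<lambda>S. g (h @ [S])))"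
    by (subst integral_measure_pmf[OF fin]) (auto simp: o_def)
  finally show ?thesis .
qed

lemma expectation_hist_pmf_le_fixpoint:
  fixes \<Phi> :: "history \<Rightarrow> real"
  assumes fin: "\<And>h. finite (set_pmf (E h))" and r: "0 \<le> r" "r < 1"
    and init: "\<Phi> [] \<le> a / (1 - r)"
    and drift: "\<And>h. measure_pmf.expectation (E h) (\<lambda>S. \<Phi> (h @ [S])) \<le> a + r * \<Phi> h"
  shows "measure_pmf.expectation (hist_pmf E t) \<Phi> \<le> a / (1 - r)"
proof (induction t)
  case 0
  then show ?case using init by simp
next
  case (Suc t)
  have fin_t: "finite (set_pmf (hist_pmf E t))"
    using fin by (rule finite_set_pmf_hist_pmf)
  have "measure_pmf.expectation (hist_pmf E (Suc t)) \<Phi>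
     = measure_pmf.expectation (hist_pmf E t) (\<lambda>h. measure_pmf.expectation (E h) (\<lambda>S. \<Phi> (h @ [S])))"
    using fin by (rule expectation_hist_pmf_Suc)
  also have "\<dots> \<le> measure_pmf.expectation (hist_pmf E t) (\<lambda>h. a + r * \<Phi> h)"
    using drift fin_t by (intro integral_mono integrable_measure_pmf_finite) auto
  also have "\<dots> = a + r * measure_pmf.expectation (hist_pmf E t) \<Phi>"
    using fin_t by (simp add: integrable_measure_pmf_finite)
  also have "\<dots> \<le> a + r * (a / (1 - r))"
    using Suc r by (intro add_left_mono mult_left_mono) auto
  also have "\<dots> = a / (1 - r)"
    using r by (simp add: field_simps)
  finally show ?case .
qed

lemma expectation_if_mem:
  fixes M :: "'a set pmf"
  assumes "finite (set_pmf M)"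
  shows "measure_pmf.expectation M (\<lambda>S. if j \<in> S then a else (b::real))
     = a * measure_pmf.prob M {S. j \<in> S} + b * (1 - measure_pmf.prob M {S. j \<in> S})"
proof -
  have "(\<lambda>S. if j \<in> S then a else b) = (\<lambda>S. b + (a - b) * indicator {S. j \<in> S} S)"
    by (auto simp: indicator_def)
  then have "measure_pmf.expectation M (\<lambda>S. if j \<in> S then a else b)
     = b + (a - b) * measure_pmf.prob M {S. j \<in> S}"
    using assms by (simp add: integrable_measure_pmf_finite)
  then show ?thesis by (simp add: algebra_simps)
qed

lemma exp_minus_le_inverse: "0 \<le> (y::real) \<Longrightarrow> exp (- y) \<le> 1 / (1 + y)"
  using exp_ge_add_one_self[of y] by (simp add: exp_minus field_simps)

lemma half_le_one_minus_exp_minus: "0 \<le> (u::real) \<Longrightarrow> u \<le> 1 \<Longrightarrow> u / 2 \<le> 1 - exp (- u)"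
proof -
  assume u: "0 \<le> u" "u \<le> 1"
  then have "u / 2 \<le> 1 - 1 / (1 + u)"
    using mult_left_mono[of u 1 u] by (simp add: field_simps)
  with exp_minus_le_inverse[OF u(1)] show ?thesis by simp
qed

lemma exp_max_zero_le: "exp (l * max 0 z) \<le> 1 + exp (l * (z::real))"
  by (cases "0 \<le> z") (auto simp: max_def)

lemma drift_exponent_le:
  fixes e :: real
  assumes "0 < e" "e \<le> 1"
  shows "e / 4 - (1 - exp (- (e / 4 * (1 + e)))) \<le> - (e^2 / 12)"
proof -
  define y where "y = e / 4 * (1 + e)"
  have "e * (1 + e) \<le> 1 * 2"
    using assms by (intro mult_mono) auto
  then have y: "0 \<le> y" "y \<le> 1 / 2"
    using assms unfolding y_def by auto
  have "y - e \<le> - (e / 2)"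
    using assms mult_left_mono[of e 1 e] unfolding y_def by (simp add: field_simps)
  then have "e / 4 * (y - e) \<le> - (e^2 / 8)"
    using mult_left_mono[of "y - e" "- (e / 2)" "e / 4"] assms by (simp add: power2_eq_square)
  moreover have "(e^2 / 8) / (3 / 2) \<le> (e^2 / 8) / (1 + y)"
    using y by (intro divide_left_mono) auto
  ultimately have "e / 4 * (y - e) / (1 + y) \<le> - (e^2 / 12)"
    using y by (simp add: divide_right_mono_neg field_simps)
  moreover have "e / 4 - (1 - 1 / (1 + y)) = e / 4 * (y - e) / (1 + y)"
    using y unfolding y_def by (simp add: field_simps)
  ultimately show ?thesis
    using exp_minus_le_inverse[OF y(1)] unfolding y_def by linarith
qed

lemma div_one_minus_exp_le_poly:
  fixes m e :: real
  assumes m: "1 \<le> m" and e: "1 \<le> m * e" "e \<le> 1"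
  shows "m / (1 - exp (- (e^2 / (12 * m^2)))) \<le> 24 * m^5"
proof -
  define u where "u = e^2 / (12 * m^2)"
  have "1 / m \<le> e"
    using e m by (simp add: field_simps)
  then have "(1 / m)^2 \<le> e^2"
    using m by (intro power_mono) auto
  then have "(1 / m)^2 / (12 * m^2) \<le> u"
    unfolding u_def by (intro divide_right_mono) auto
  moreover have "(1 / m)^2 / (12 * m^2) = 1 / (12 * m^4)"
    by (simp add: power2_eq_square power4_eq_xxxx)
  ultimately have u_low: "1 / (12 * m^4) \<le> u"
    by simp
  have "0 < m * e"
    using e by linarith
  then have "0 < e"
    by (rule zero_less_mult_pos) (use m in linarith)
  then have "e^2 \<le> 1"
    using e by (simp add: power_le_one)
  moreover have "1 \<le> m^2"
    using m by (simp add: one_le_power)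
  ultimately have "e^2 \<le> 12 * m^2"
    by linarith
  then have "u \<le> 1"
    unfolding u_def using m by simp
  moreover have "0 \<le> u"
    unfolding u_def by simp
  ultimately have low: "1 / (24 * m^4) \<le> 1 - exp (- u)"
    using u_low half_le_one_minus_exp_minus[of u] by simp
  have "0 < 1 / (24 * m^4)"
    using m by simp
  with low have "0 < (1 - exp (- u)) * (1 / (24 * m^4))"
    by (intro mult_pos_pos) linarith+
  with low have "m / (1 - exp (- u)) \<le> m / (1 / (24 * m^4))"
    using m by (intro divide_left_mono) auto
  also have "\<dots> = 24 * m^5"
    by (simp add: field_simps power_numeral_reduce)
  finally show ?thesis
    unfolding u_def by simp
qed

lemma poly_div_powr_le:
  fixes m c :: real
  assumes "2 \<le> m"
  shows "24 * m^5 / m powr (c + 10) \<le> 1 / m powr c"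
proof -
  have pos: "0 < m^5" "0 < m powr c"
    using assms by auto
  have "m powr (c + 10) = m powr c * (m^5 * m^5)"
    using assms by (simp add: powr_add powr_realpow flip: power_add)
  then have "24 * m^5 / m powr (c + 10) = (24 / m^5) / m powr c"
    using pos by (simp add: field_simps)
  also have "\<dots> \<le> 1 / m powr c"
  proof (rule divide_right_mono)
    show "24 / m^5 \<le> 1"
      using power_mono[OF assms, of 5] pos by simp
  qed (use pos in simp)
  finally show ?thesis .
qed

definition potential :: "nat \<Rightarrow> filler \<Rightarrow> real \<Rightarrow> history \<Rightarrow> real" where
  "potential n F e h = (\<Sum>j<n. exp (e / 4 * fills F e h j))"

text \<open>The additive \<open>1\<close> pays for the truncation of the fill at \<open>0\<close>.\<close>

lemma expectation_exp_cup_update_le: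
  fixes M :: "nat set pmf" and e x q :: real
  assumes fin: "finite (set_pmf M)" and e: "0 < e" "e \<le> 1"
    and q: "0 \<le> q" "q \<le> 1" and prob: "measure_pmf.prob M {S. j \<in> S} = q"
  shows "measure_pmf.expectation M
           (\<lambda>S. exp (e / 4 * (if j \<in> S then max 0 (x + q - (1 + e)) else x + q)))
         \<le> 1 + exp (- (e^2 / 12) * q) * exp (e / 4 * x)"
proof -
  define l where "l = e / 4"
  define d where "d = 1 - exp (- (l * (1 + e)))"
  have pointwise: "exp (l * (if j \<in> S then max 0 (x + q - (1 + e)) else x + q))
      \<le> 1 + exp (l * (x + q)) * (if j \<in> S then 1 - d else 1)" for S
    using exp_max_zero_le[of l "x + q - (1 + e)"]
    by (auto simp: d_def algebra_simps simp flip: exp_add)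
  have "measure_pmf.expectation M
           (\<lambda>S. exp (l * (if j \<in> S then max 0 (x + q - (1 + e)) else x + q)))
      \<le> measure_pmf.expectation M (\<lambda>S. 1 + exp (l * (x + q)) * (if j \<in> S then 1 - d else 1))"
    using fin pointwise by (intro integral_mono integrable_measure_pmf_finite) auto
  also have "\<dots> = 1 + exp (l * (x + q)) * (1 - q * d)"
  proof -
    have "measure_pmf.expectation M (\<lambda>S. if j \<in> S then 1 - d else 1) = 1 - q * d"
      using expectation_if_mem[OF fin, of j "1 - d" 1] prob by (simp add: algebra_simps)
    then show ?thesis
      using fin by (simp add: integrable_measure_pmf_finite)
  qed
  also have "\<dots> \<le> 1 + exp (l * (x + q)) * exp (- (q * d))"
    using exp_ge_add_one_self[of "- (q * d)"] by simp
  also have "\<dots> = 1 + exp (l * x) * exp (q * (l - d))"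
    by (simp add: algebra_simps flip: exp_add)
  also have "\<dots> \<le> 1 + exp (- (e^2 / 12) * q) * exp (l * x)"
    using mult_left_mono[OF drift_exponent_le[OF e] q(1)] unfolding l_def d_def
    by (simp add: algebra_simps)
  finally show ?thesis unfolding l_def .
qed

lemma expectation_potential_snoc_le:
  assumes F: "valid_filler n F" and E: "proportional_emptier n F E" and e: "0 < e" "e \<le> 1"
  shows "measure_pmf.expectation (E h) (\<lambda>S. potential n F e (h @ [S]))
    \<le> real n + exp (- (e^2 / (12 * (real n)^2))) * potential n F e h"
proof -
  have fin: "finite (set_pmf (E h))"
    using E by (rule finite_set_pmf_proportional_emptier)
  have "measure_pmf.expectation (E h) (\<lambda>S. potential n F e (h @ [S]))
      = (\<Sum>j<n. measure_pmf.expectation (E h) (\<lambda>S. exp (e / 4 * fills F e (h @ [S]) j)))"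
    unfolding potential_def using fin by (simp add: integrable_measure_pmf_finite)
  also have "\<dots> \<le> (\<Sum>j<n. 1 + exp (- (e^2 / (12 * (real n)^2))) * exp (e / 4 * fills F e h j))"
  proof (rule sum_mono)
    fix j assume "j \<in> {..<n}"
    then have q: "0 \<le> snd (F h) j" "snd (F h) j \<le> 1" "1 / (real n)^2 \<le> snd (F h) j"
      and prob: "measure_pmf.prob (E h) {S. j \<in> S} = snd (F h) j"
      using F E unfolding valid_filler_def proportional_emptier_def by auto
    have decay: "exp (- (e^2 / 12) * snd (F h) j) \<le> exp (- (e^2 / (12 * (real n)^2)))"
      using mult_left_mono[OF q(3), of "e^2 / 12"] by simp
    have "measure_pmf.expectation (E h) (\<lambda>S. exp (e / 4 * fills F e (h @ [S]) j))
        \<le> 1 + exp (- (e^2 / 12) * snd (F h) j) * exp (e / 4 * fills F e h j)"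
      unfolding fills_snoc Let_def by (rule expectation_exp_cup_update_le[OF fin e q(1,2) prob])
    also have "\<dots> \<le> 1 + exp (- (e^2 / (12 * (real n)^2))) * exp (e / 4 * fills F e h j)"
      using mult_right_mono[OF decay, of "exp (e / 4 * fills F e h j)"] by simp
    finally show "measure_pmf.expectation (E h) (\<lambda>S. exp (e / 4 * fills F e (h @ [S]) j))
        \<le> 1 + exp (- (e^2 / (12 * (real n)^2))) * exp (e / 4 * fills F e h j)" .
  qed
  also have "\<dots> = real n + exp (- (e^2 / (12 * (real n)^2))) * potential n F e h"
    unfolding potential_def by (simp add: sum.distrib sum_distrib_left)
  finally show ?thesis .
qed

lemma expectation_potential_le:
  assumes "valid_filler n F" "proportional_emptier n F E" "0 < e" "e \<le> 1" "0 < n"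
  shows "measure_pmf.expectation (hist_pmf E t) (potential n F e)
    \<le> real n / (1 - exp (- (e^2 / (12 * (real n)^2))))"
proof (rule expectation_hist_pmf_le_fixpoint)
  show "exp (- (e^2 / (12 * (real n)^2))) < 1"
    using assms by simp
  then show "potential n F e [] \<le> real n / (1 - exp (- (e^2 / (12 * (real n)^2))))"
    by (simp add: potential_def fills_Nil field_simps)
qed (use assms in \<open>auto intro: expectation_potential_snoc_le finite_set_pmf_proportional_emptier\<close>)

lemma exp_backlog_le_potential:
  assumes "0 < n"
  shows "exp (e / 4 * backlog n F e h) \<le> potential n F e h"
proof -
  have "backlog n F e h \<in> (\<lambda>j. fills F e h j) ` {..<n}"
    unfolding backlog_def using assms by (intro Max_in) auto
  then obtain j where "j < n" "backlog n F e h = fills F e h j"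
    by auto
  then show ?thesis
    unfolding potential_def by (auto intro: member_le_sum)
qed

lemma prob_backlog_le_ge:
  fixes M :: "history pmf"
  assumes fin: "finite (set_pmf M)" and n: "0 < n" and e: "0 < e"
  shows "1 - measure_pmf.expectation M (potential n F e) / exp (e / 4 * a)
    \<le> measure_pmf.prob M {h. backlog n F e h \<le> a}"
proof -
  have "measure_pmf.prob M {h \<in> space (measure_pmf M). exp (e / 4 * a) \<le> potential n F e h}
      \<le> measure_pmf.expectation M (potential n F e) / exp (e / 4 * a)"
    using fin by (intro integral_Markov_inequality_measure[where A = UNIV])
      (auto intro!: integrable_measure_pmf_finite AE_I2 sum_nonneg simp: potential_def)
  moreover have "UNIV - {h. backlog n F e h \<le> a} \<subseteq> {h. exp (e / 4 * a) \<le> potential n F e h}"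
  proof
    fix h assume "h \<in> UNIV - {h. backlog n F e h \<le> a}"
    then have "exp (e / 4 * a) \<le> exp (e / 4 * backlog n F e h)"
      using e by simp
    also have "\<dots> \<le> potential n F e h"
      using n by (rule exp_backlog_le_potential)
    finally show "h \<in> {h. exp (e / 4 * a) \<le> potential n F e h}" by simp
  qed
  then have "measure_pmf.prob M (UNIV - {h. backlog n F e h \<le> a})
      \<le> measure_pmf.prob M {h \<in> space (measure_pmf M). exp (e / 4 * a) \<le> potential n F e h}"
    by (intro measure_pmf.finite_measure_mono) auto
  ultimately show ?thesis
    using measure_pmf.prob_compl[of "{h. backlog n F e h \<le> a}" M] by simp
qed

lemma prob_backlog_le_log_ge:
  assumes F: "valid_filler n F" and E: "proportional_emptier n F E"
    and n: "2 \<le> n" and ne: "1 \<le> real n * e" and e: "e \<le> 1"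
  shows "1 - 1 / real n powr c
    \<le> measure_pmf.prob (hist_pmf E t) {h. backlog n F e h \<le> 4 * (c + 10) / e * ln (real n)}"
proof -
  define a where "a = 4 * (c + 10) / e * ln (real n)"
  have "0 < real n * e"
    using ne by linarith
  then have e_pos: "0 < e"
    by (rule zero_less_mult_pos) (use n in simp)
  have "measure_pmf.expectation (hist_pmf E t) (potential n F e) \<le> 24 * real n ^ 5"
    using expectation_potential_le[OF F E e_pos e, of t] div_one_minus_exp_le_poly[of "real n" e] ne e n
    by simp
  moreover have "exp (e / 4 * a) = real n powr (c + 10)"
    using e_pos n unfolding a_def by (simp add: powr_def)
  ultimately have "measure_pmf.expectation (hist_pmf E t) (potential n F e) / exp (e / 4 * a)
      \<le> 24 * real n ^ 5 / real n powr (c + 10)"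
    by (simp add: divide_right_mono)
  also have "\<dots> \<le> 1 / real n powr c"
    using n by (intro poly_div_powr_le) simp
  finally have "1 - 1 / real n powr c
      \<le> 1 - measure_pmf.expectation (hist_pmf E t) (potential n F e) / exp (e / 4 * a)"
    by simp
  also have "\<dots> \<le> measure_pmf.prob (hist_pmf E t) {h. backlog n F e h \<le> a}"
    using n e_pos by (intro prob_backlog_le_ge finite_set_pmf_hist_pmf
        finite_set_pmf_proportional_emptier[OF E]) auto
  finally show ?thesis
    unfolding a_def .
qed

theorem lemma7p4:
  fixes eps :: "nat \<Rightarrow> real"
  assumes "\<And>n. eps n \<le> 1"
    and "filterlim (\<lambda>n. real n * eps n) at_top sequentially"
  shows "\<forall>c>0. \<exists>C>0. \<exists>N. \<forall>n\<ge>N. \<forall>F E t.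
           valid_filler n F \<longrightarrow> proportional_emptier n F E \<longrightarrow>
           measure_pmf.prob (hist_pmf E t)
             {h. backlog n F (eps n) h \<le> C / eps n * ln (real n)}
           \<ge> 1 - 1 / real n powr c"
proof (intro allI impI)
  fix c :: real
  assume c: "0 < c"
  obtain N where N: "\<And>n. n \<ge> N \<Longrightarrow> 1 \<le> real n * eps n"
    using assms(2) by (auto simp: filterlim_at_top eventually_sequentially)
  show "\<exists>C>0. \<exists>N. \<forall>n\<ge>N. \<forall>F E t.
           valid_filler n F \<longrightarrow> proportional_emptier n F E \<longrightarrow>
           measure_pmf.prob (hist_pmf E t)
             {h. backlog n F (eps n) h \<le> C / eps n * ln (real n)}
           \<ge> 1 - 1 / real n powr c"
  proof (intro exI[of _ "4 * (c + 10)"] conjI exI[of _ "max N 2"] allI impI)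
    fix n F E t
    assume "max N 2 \<le> n" "valid_filler n F" "proportional_emptier n F E"
    then show "1 - 1 / real n powr c \<le> measure_pmf.prob (hist_pmf E t)
        {h. backlog n F (eps n) h \<le> 4 * (c + 10) / eps n * ln (real n)}"
      using N[of n] assms(1)[of n] by (intro prob_backlog_le_log_ge) auto
  qed (use c in simp)
qed

end
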